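(* Let \[ A=\begin{pmatrix} a & \delta & \gamma \\ \bar\delta & b & \varepsilon \\ \bar\gamma & \bar\varepsilon & c\end{pmatrix} \] be a $3\times 3$ Hermitian matrix, where $a,b,c\in\mathbb{R}$ and $\gamma,\delta,\varepsilon\in\mathbb{C}$ are all non-zero. Then $A$ has an eigenvalue $\lambda$ of multiplicity at least $2$ if and only if \[ a-\frac{\bar\delta\gamma}{\varepsilon}=b-\frac{\delta\varepsilon}{\gamma}=c-\frac{\gamma\bar\varepsilon}{\delta}=\lambda\in\mathbb{R} \] (a system of three real equations). Moreover, when this holds, the remaining eigenvalue is $\lambda'=\operatorname{tr}(A)-2\lambda$, so the spectrum is $(\lambda,\lambda,\lambda')$, and $\lambda'>\lambda$ if and only if $\operatorname{Re}(\delta\varepsilon\bar\gamma)>0$.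
   Context: $\operatorname{tr}(A)$ denotes the trace of $A$, and a bar denotes complex conjugation. *)

theory Defs
  imports "HOL-Analysis.Analysis" "Jordan_Normal_Form.Char_Poly"
begin

definition herm3 :: "real \<Rightarrow> real \<Rightarrow> real \<Rightarrow> complex \<Rightarrow> complex \<Rightarrow> complex \<Rightarrow> complex mat" where
  "herm3 a b c \<gamma> \<delta> \<epsilon> = mat_of_rows_list 3
     [[complex_of_real a, \<delta>, \<gamma>],
      [cnj \<delta>, complex_of_real b, \<epsilon>],
      [cnj \<gamma>, cnj \<epsilon>, complex_of_real c]]"

definition mat_trace :: "'a :: comm_ring_1 mat \<Rightarrow> 'a" where
  "mat_trace A = (\<Sum>i<dim_row A. A $$ (i, i))"

end

theory Submission
  imports Defs
begin

text \<open>The characteristic polynomial of \<open>A\<close> is \<open>t^3 - tr(A) t^2 + E t - D\<close> with real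
  coefficients, where \<open>E\<close> is the sum of the principal \<open>2 \<times> 2\<close> minors and \<open>D = det A\<close>.
  A double root \<open>l\<close> is real: its conjugate is a root as well, and if it were the simple root
  then \<open>2 l + cnj l = tr(A)\<close> would force \<open>Im l = 0\<close>.
  A real \<open>x\<close> is a double root iff \<open>D\<close> and \<open>E\<close> of the Hermitian matrix \<open>B = A - x I\<close> vanish.
  The squared moduli of all \<open>2 \<times> 2\<close> minors of \<open>B\<close> sum to \<open>E(B)^2 - 2 tr(B) D(B)\<close>, so this
  happens iff all these minors vanish; with non-zero off-diagonal entries that is exactly the
  system of three equations. Finally \<open>(a - x)|\<epsilon>|^2\<close>, \<open>(b - x)|\<gamma>|^2\<close> and \<open>(c - x)|\<delta>|^2\<close> all
  equal \<open>Re(\<delta> \<epsilon> cnj \<gamma>)\<close>, so the third eigenvalue \<open>tr(A) - 2x\<close> exceeds \<open>x\<close> iff this number is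
  positive.\<close>

lemma det_2x2:
  fixes M :: "'a :: comm_ring_1 mat"
  assumes "M \<in> carrier_mat 2 2"
  shows "det M = M $$ (0,0) * M $$ (1,1) - M $$ (0,1) * M $$ (1,0)"
proof -
  have "det M = (\<Sum>j<2. M $$ (0,j) * cofactor M 0 j)"
    using laplace_expansion_row[OF assms, of 0] by simp
  also have "\<dots> = M $$ (0,0) * cofactor M 0 0 + M $$ (0,1) * cofactor M 0 1"
    by (simp add: numeral_2_eq_2)
  also have "cofactor M 0 0 = M $$ (1,1)"
    unfolding cofactor_def by (subst det_single) (use assms in \<open>auto simp: mat_delete_def\<close>)
  also have "cofactor M 0 1 = - M $$ (1,0)"
    unfolding cofactor_def by (subst det_single) (use assms in \<open>auto simp: mat_delete_def\<close>)
  finally show ?thesis by (simp add: algebra_simps)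
qed

lemma det_3x3:
  fixes M :: "'a :: comm_ring_1 mat"
  assumes "M \<in> carrier_mat 3 3"
  shows "det M =
      M $$ (0,0) * (M $$ (1,1) * M $$ (2,2) - M $$ (1,2) * M $$ (2,1))
    - M $$ (0,1) * (M $$ (1,0) * M $$ (2,2) - M $$ (1,2) * M $$ (2,0))
    + M $$ (0,2) * (M $$ (1,0) * M $$ (2,1) - M $$ (1,1) * M $$ (2,0))"
proof -
  have "det M = (\<Sum>j<3. M $$ (0,j) * cofactor M 0 j)"
    using laplace_expansion_row[OF assms, of 0] by simp
  also have "\<dots> = M $$ (0,0) * cofactor M 0 0 + M $$ (0,1) * cofactor M 0 1
      + M $$ (0,2) * cofactor M 0 2"
    by (simp add: numeral_3_eq_3 numeral_2_eq_2)
  also have "cofactor M 0 0 = M $$ (1,1) * M $$ (2,2) - M $$ (1,2) * M $$ (2,1)"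
    unfolding cofactor_def
    by (subst det_2x2) (use assms in \<open>auto simp: mat_delete_def numeral_2_eq_2\<close>)
  also have "cofactor M 0 1 = - (M $$ (1,0) * M $$ (2,2) - M $$ (1,2) * M $$ (2,0))"
    unfolding cofactor_def
    by (subst det_2x2) (use assms in \<open>auto simp: mat_delete_def numeral_2_eq_2\<close>)
  also have "cofactor M 0 2 = M $$ (1,0) * M $$ (2,1) - M $$ (1,1) * M $$ (2,0)"
    unfolding cofactor_def
    by (subst det_2x2) (use assms in \<open>auto simp: mat_delete_def numeral_2_eq_2\<close>)
  finally show ?thesis by (simp add: algebra_simps)
qed

lemma square_times_linear_poly:
  fixes l m :: "'a :: comm_ring_1"
  shows "[:-l, 1:] ^ 2 * [:-m, 1:] = [:- (l^2 * m), l^2 + 2 * l * m, - (2 * l + m), 1:]"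
  by (simp add: power2_eq_square algebra_simps)

lemma monic_cubic_eq_square_times_linear_iff:
  fixes c0 c1 c2 l m :: "'a :: idom"
  assumes "c2 = - (2 * l + m)"
  shows "[:c0, c1, c2, 1:] = [:-l, 1:] ^ 2 * [:-m, 1:] \<longleftrightarrow>
    poly [:c0, c1, c2, 1:] l = 0 \<and> poly (pderiv [:c0, c1, c2, 1:]) l = 0"
proof -
  have deriv: "poly (pderiv [:c0, c1, c2, 1:]) l = c1 - (l^2 + 2 * l * m)"
    unfolding assms by (simp add: pderiv_pCons power2_eq_square algebra_simps)
  have at_root: "poly [:c0, c1, c2, 1:] l = (c0 + l^2 * m) + l * (c1 - (l^2 + 2 * l * m))"
    unfolding assms by (simp add: power2_eq_square algebra_simps)
  show ?thesis
    unfolding square_times_linear_poly deriv at_root using assms by (auto simp: eq_neg_iff_add_eq_0)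
qed

lemma square_dvd_monic_cubic_iff:
  fixes c0 c1 c2 l m :: "'a :: idom"
  assumes "c2 = - (2 * l + m)"
  shows "[:-l, 1:] ^ 2 dvd [:c0, c1, c2, 1:] \<longleftrightarrow> [:c0, c1, c2, 1:] = [:-l, 1:] ^ 2 * [:-m, 1:]"
proof
  define r where "r = [:c0 + l^2 * m, c1 - l^2 - 2 * l * m:]"
  have r_eq: "[:c0, c1, c2, 1:] = [:-l, 1:] ^ 2 * [:-m, 1:] + r"
    unfolding r_def square_times_linear_poly assms by simp
  assume "[:-l, 1:] ^ 2 dvd [:c0, c1, c2, 1:]"
  then have "[:-l, 1:] ^ 2 dvd r"
    unfolding r_eq by (metis dvd_add_right_iff dvd_triv_left)
  moreover have "degree r < degree ([:-l, 1:] ^ 2)"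
    unfolding r_def by (simp add: degree_linear_power)
  ultimately have "r = 0"
    using dvd_imp_degree_le not_le by blast
  then show "[:c0, c1, c2, 1:] = [:-l, 1:] ^ 2 * [:-m, 1:]"
    using r_eq by simp
qed (simp only: dvd_triv_left)

lemma multiple_eigenvalue_iff_square_dvd_char_poly:
  fixes A :: "'a :: field mat"
  assumes "A \<in> carrier_mat n n"
  shows "eigenvalue A l \<and> 2 \<le> order l (char_poly A) \<longleftrightarrow> [:-l, 1:] ^ 2 dvd char_poly A"
proof -
  have "char_poly A \<noteq> 0"
    using degree_monic_char_poly[OF assms] by auto
  then show ?thesis
    unfolding eigenvalue_root_char_poly[OF assms] order_divides by (auto simp: order_root)
qed

lemma herm3_dim [simp]:
  "dim_row (herm3 a b c \<gamma> \<delta> \<epsilon>) = 3" "dim_col (herm3 a b c \<gamma> \<delta> \<epsilon>) = 3"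
  by (simp_all add: herm3_def mat_of_rows_list_def)

lemma herm3_carrier [simp]: "herm3 a b c \<gamma> \<delta> \<epsilon> \<in> carrier_mat 3 3"
  by (rule carrier_matI) simp_all

lemma herm3_index [simp]:
  assumes "i < 3" "j < 3"
  shows "herm3 a b c \<gamma> \<delta> \<epsilon> $$ (i, j) =
    [[complex_of_real a, \<delta>, \<gamma>], [cnj \<delta>, complex_of_real b, \<epsilon>], [cnj \<gamma>, cnj \<epsilon>, complex_of_real c]] ! i ! j"
  using assms unfolding herm3_def mat_of_rows_list_def by (subst index_mat) auto

lemma mat_trace_herm3: "mat_trace (herm3 a b c \<gamma> \<delta> \<epsilon>) = complex_of_real (a + b + c)"
proof -
  have "{..<3::nat} = {0, 1, 2}" by auto
  then show ?thesis
    unfolding mat_trace_def herm3_dim by simp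
qed

definition herm3_minor_sum :: "real \<Rightarrow> real \<Rightarrow> real \<Rightarrow> complex \<Rightarrow> complex \<Rightarrow> complex \<Rightarrow> real" where
  "herm3_minor_sum a b c \<gamma> \<delta> \<epsilon> = a * b + b * c + c * a - (cmod \<delta>)^2 - (cmod \<gamma>)^2 - (cmod \<epsilon>)^2"

definition herm3_det :: "real \<Rightarrow> real \<Rightarrow> real \<Rightarrow> complex \<Rightarrow> complex \<Rightarrow> complex \<Rightarrow> real" where
  "herm3_det a b c \<gamma> \<delta> \<epsilon> = a * b * c + 2 * Re (\<delta> * \<epsilon> * cnj \<gamma>)
     - a * (cmod \<epsilon>)^2 - b * (cmod \<gamma>)^2 - c * (cmod \<delta>)^2"

lemma herm3_minor_sum_complex:
  "complex_of_real (herm3_minor_sum a b c \<gamma> \<delta> \<epsilon>) =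
     a * b + b * c + c * a - \<delta> * cnj \<delta> - \<gamma> * cnj \<gamma> - \<epsilon> * cnj \<epsilon>"
  unfolding herm3_minor_sum_def
  by (simp only: of_real_diff of_real_add of_real_mult complex_norm_square)

lemma herm3_det_complex:
  "complex_of_real (herm3_det a b c \<gamma> \<delta> \<epsilon>) =
     a * b * c + \<delta> * \<epsilon> * cnj \<gamma> + cnj \<delta> * cnj \<epsilon> * \<gamma>
     - a * (\<epsilon> * cnj \<epsilon>) - b * (\<gamma> * cnj \<gamma>) - c * (\<delta> * cnj \<delta>)"
proof -
  have "2 * complex_of_real (Re (\<delta> * \<epsilon> * cnj \<gamma>)) = \<delta> * \<epsilon> * cnj \<gamma> + cnj \<delta> * cnj \<epsilon> * \<gamma>"
    using complex_add_cnj[of "\<delta> * \<epsilon> * cnj \<gamma>"] by simp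
  then show ?thesis
    unfolding herm3_det_def
    by (simp only: of_real_diff of_real_add of_real_mult of_real_numeral complex_norm_square add.assoc)
qed

lemma char_poly_herm3:
  "char_poly (herm3 a b c \<gamma> \<delta> \<epsilon>) =
     [:- complex_of_real (herm3_det a b c \<gamma> \<delta> \<epsilon>), complex_of_real (herm3_minor_sum a b c \<gamma> \<delta> \<epsilon>),
       - complex_of_real (a + b + c), 1:]"
proof (rule poly_eq_poly_eq_iff[THEN iffD1, OF ext])
  fix k
  let ?M = "- char_matrix (herm3 a b c \<gamma> \<delta> \<epsilon>) k"
  have M: "?M \<in> carrier_mat 3 3" by simp
  have "poly (char_poly (herm3 a b c \<gamma> \<delta> \<epsilon>)) k = det ?M"
    by (rule char_poly_matrix[OF herm3_carrier])
  also have "\<dots> = (k - a) * ((k - b) * (k - c) - \<epsilon> * cnj \<epsilon>)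
      + \<delta> * (- cnj \<delta> * (k - c) - \<epsilon> * cnj \<gamma>) - \<gamma> * (cnj \<delta> * cnj \<epsilon> + (k - b) * cnj \<gamma>)"
    unfolding det_3x3[OF M] by (simp add: char_matrix_def herm3_index)
  also have "\<dots> = poly [:- complex_of_real (herm3_det a b c \<gamma> \<delta> \<epsilon>),
      complex_of_real (herm3_minor_sum a b c \<gamma> \<delta> \<epsilon>), - complex_of_real (a + b + c), 1:] k"
    by (simp add: herm3_det_complex herm3_minor_sum_complex algebra_simps)
  finally show "poly (char_poly (herm3 a b c \<gamma> \<delta> \<epsilon>)) k = poly [:- complex_of_real (herm3_det a b c \<gamma> \<delta> \<epsilon>),
      complex_of_real (herm3_minor_sum a b c \<gamma> \<delta> \<epsilon>), - complex_of_real (a + b + c), 1:] k" .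
qed

lemma poly_char_poly_herm3:
  "poly (char_poly (herm3 a b c \<gamma> \<delta> \<epsilon>)) (complex_of_real x) =
     - complex_of_real (herm3_det (a - x) (b - x) (c - x) \<gamma> \<delta> \<epsilon>)"
  unfolding char_poly_herm3 herm3_det_complex herm3_minor_sum_complex
  by (simp add: algebra_simps power2_eq_square)

lemma poly_pderiv_char_poly_herm3:
  "poly (pderiv (char_poly (herm3 a b c \<gamma> \<delta> \<epsilon>))) (complex_of_real x) =
     complex_of_real (herm3_minor_sum (a - x) (b - x) (c - x) \<gamma> \<delta> \<epsilon>)"
  unfolding char_poly_herm3 herm3_minor_sum_complex
  by (simp add: pderiv_pCons algebra_simps)

lemma char_poly_herm3_double_root_real:
  assumes "char_poly (herm3 a b c \<gamma> \<delta> \<epsilon>) = [:-l, 1:] ^ 2 * [:-m, 1:]"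
  shows "l \<in> \<real>"
proof -
  let ?P = "char_poly (herm3 a b c \<gamma> \<delta> \<epsilon>)"
  have trace: "2 * l + m = complex_of_real (a + b + c)"
    using assms unfolding char_poly_herm3 square_times_linear_poly by (simp add: algebra_simps)
  have "poly ?P (cnj l) = cnj (poly ?P l)"
    unfolding char_poly_herm3 by simp
  also have "poly ?P l = 0"
    unfolding assms by simp
  finally have "cnj l = l \<or> cnj l = m"
    unfolding assms by simp
  then show ?thesis
  proof
    assume "cnj l = m"
    then have "Im (2 * l + cnj l) = 0"
      using trace by simp
    then show ?thesis
      by (simp add: complex_is_Real_iff)
  qed (simp add: Reals_cnj_iff)
qed

text \<open>With primed variables read as conjugates, the left-hand side is the sum of the squared
  moduli of all \<open>2 \<times> 2\<close> minors of a Hermitian \<open>3 \<times> 3\<close> matrix.\<close>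

lemma complementary_minors_identity:
  fixes a b c d d' g g' e e' :: "'a :: comm_ring_1"
  shows "(a * b - d * d')^2 + (a * c - g * g')^2 + (b * c - e * e')^2
    + 2 * ((a * e - d' * g) * (a * e' - d * g')) + 2 * ((b * g - d * e) * (b * g' - d' * e'))
    + 2 * ((c * d - g * e') * (c * d' - g' * e))
  = (a * b + b * c + c * a - d * d' - g * g' - e * e')^2
    - 2 * (a + b + c) * (a * b * c + d * e * g' + d' * e' * g - a * (e * e') - b * (g * g') - c * (d * d'))"
  by (simp add: algebra_simps power2_eq_square)

lemma herm3_minor_square_sum:
  fixes a b c :: real and \<gamma> \<delta> \<epsilon> :: complex
  shows "(a * b - (cmod \<delta>)^2)^2 + (a * c - (cmod \<gamma>)^2)^2 + (b * c - (cmod \<epsilon>)^2)^2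
   + 2 * (cmod (a * \<epsilon> - cnj \<delta> * \<gamma>))^2 + 2 * (cmod (b * \<gamma> - \<delta> * \<epsilon>))^2
   + 2 * (cmod (c * \<delta> - \<gamma> * cnj \<epsilon>))^2
   = (herm3_minor_sum a b c \<gamma> \<delta> \<epsilon>)^2 - 2 * (a + b + c) * herm3_det a b c \<gamma> \<delta> \<epsilon>"
proof -
  note norm_square = complex_norm_square[unfolded of_real_power]
  have conj: "cnj (a * \<epsilon> - cnj \<delta> * \<gamma>) = a * cnj \<epsilon> - \<delta> * cnj \<gamma>"
    "cnj (b * \<gamma> - \<delta> * \<epsilon>) = b * cnj \<gamma> - cnj \<delta> * cnj \<epsilon>"
    "cnj (c * \<delta> - \<gamma> * cnj \<epsilon>) = c * cnj \<delta> - cnj \<gamma> * \<epsilon>"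
    by simp_all
  have "complex_of_real ((a * b - (cmod \<delta>)^2)^2 + (a * c - (cmod \<gamma>)^2)^2 + (b * c - (cmod \<epsilon>)^2)^2
   + 2 * (cmod (a * \<epsilon> - cnj \<delta> * \<gamma>))^2 + 2 * (cmod (b * \<gamma> - \<delta> * \<epsilon>))^2
   + 2 * (cmod (c * \<delta> - \<gamma> * cnj \<epsilon>))^2)
   = complex_of_real ((herm3_minor_sum a b c \<gamma> \<delta> \<epsilon>)^2 - 2 * (a + b + c) * herm3_det a b c \<gamma> \<delta> \<epsilon>)"
    unfolding of_real_add of_real_diff of_real_mult of_real_power of_real_numeral
      herm3_minor_sum_complex herm3_det_complex norm_square conj
    by (rule complementary_minors_identity)
  then show ?thesis
    by (simp only: of_real_eq_iff)
qed

lemma herm3_rank_one_if_det_minor_sum_zero: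
  fixes a b c :: real and \<gamma> \<delta> \<epsilon> :: complex
  assumes "herm3_det a b c \<gamma> \<delta> \<epsilon> = 0" "herm3_minor_sum a b c \<gamma> \<delta> \<epsilon> = 0"
  shows "a * \<epsilon> = cnj \<delta> * \<gamma> \<and> b * \<gamma> = \<delta> * \<epsilon> \<and> c * \<delta> = \<gamma> * cnj \<epsilon>"
proof -
  have sum_squares_zero: "n1 = 0 \<and> n2 = 0 \<and> n3 = 0"
    if "u1^2 + u2^2 + u3^2 + 2 * n1^2 + 2 * n2^2 + 2 * n3^2 = 0" for u1 u2 u3 n1 n2 n3 :: real
  proof -
    have "n1^2 \<le> 0" "n2^2 \<le> 0" "n3^2 \<le> 0"
      using that zero_le_power2[of u1] zero_le_power2[of u2] zero_le_power2[of u3]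
        zero_le_power2[of n1] zero_le_power2[of n2] zero_le_power2[of n3] by linarith+
    then show ?thesis
      by simp
  qed
  have "(a * b - (cmod \<delta>)^2)^2 + (a * c - (cmod \<gamma>)^2)^2 + (b * c - (cmod \<epsilon>)^2)^2
   + 2 * (cmod (a * \<epsilon> - cnj \<delta> * \<gamma>))^2 + 2 * (cmod (b * \<gamma> - \<delta> * \<epsilon>))^2
   + 2 * (cmod (c * \<delta> - \<gamma> * cnj \<epsilon>))^2 = 0"
    unfolding herm3_minor_square_sum assms by simp
  then have "cmod (a * \<epsilon> - cnj \<delta> * \<gamma>) = 0 \<and> cmod (b * \<gamma> - \<delta> * \<epsilon>) = 0
      \<and> cmod (c * \<delta> - \<gamma> * cnj \<epsilon>) = 0"
    by (rule sum_squares_zero)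
  then show ?thesis
    by simp
qed

lemma herm3_det_minor_sum_zero_if_rank_one:
  fixes a b c :: real and \<gamma> \<delta> \<epsilon> :: complex
  assumes "\<gamma> \<noteq> 0" "\<delta> \<noteq> 0" "\<epsilon> \<noteq> 0"
    and a: "a * \<epsilon> = cnj \<delta> * \<gamma>" and b: "b * \<gamma> = \<delta> * \<epsilon>" and c: "c * \<delta> = \<gamma> * cnj \<epsilon>"
  shows "herm3_det a b c \<gamma> \<delta> \<epsilon> = 0 \<and> herm3_minor_sum a b c \<gamma> \<delta> \<epsilon> = 0"
proof -
  have cancel: "x * y = r" if "x * u = p" "y * v = q" "p * q = r * (u * v)" "u \<noteq> 0" "v \<noteq> 0"
    for x y u v p q r :: complex
  proof -
    have "(x * y) * (u * v) = r * (u * v)"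
      using that(1-3) by (simp add: ac_simps)
    then show ?thesis
      using that(4,5) by simp
  qed
  have a': "a * cnj \<epsilon> = \<delta> * cnj \<gamma>"
    using arg_cong[OF a, of cnj] by simp
  have ab: "complex_of_real a * b = \<delta> * cnj \<delta>"
    by (rule cancel[OF a b _ assms(3,1)]) (simp add: ac_simps)
  have bc: "complex_of_real b * c = \<epsilon> * cnj \<epsilon>"
    by (rule cancel[OF b c _ assms(1,2)]) (simp add: ac_simps)
  have ca: "complex_of_real c * a = \<gamma> * cnj \<gamma>"
    by (rule cancel[OF c a' _ assms(2)]) (use assms(3) in \<open>simp_all add: ac_simps\<close>)
  have "complex_of_real (herm3_minor_sum a b c \<gamma> \<delta> \<epsilon>) = 0"
    unfolding herm3_minor_sum_complex ab bc ca by simp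
  moreover have "complex_of_real (herm3_det a b c \<gamma> \<delta> \<epsilon>) = 0"
  proof -
    have terms: "a * (\<epsilon> * cnj \<epsilon>) = cnj \<delta> * \<gamma> * cnj \<epsilon>" "b * (\<gamma> * cnj \<gamma>) = \<delta> * \<epsilon> * cnj \<gamma>"
      "c * (\<delta> * cnj \<delta>) = cnj \<delta> * \<gamma> * cnj \<epsilon>" "complex_of_real a * b * c = cnj \<delta> * \<gamma> * cnj \<epsilon>"
      using a b c ab by (simp_all add: mult.assoc[symmetric]) (simp_all add: ac_simps)
    show ?thesis
      unfolding herm3_det_complex terms by (simp add: algebra_simps)
  qed
  ultimately show ?thesis
    by simp
qed

lemma herm3_det_minor_sum_zero_iff:
  fixes a b c :: real and \<gamma> \<delta> \<epsilon> :: complex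
  assumes "\<gamma> \<noteq> 0" "\<delta> \<noteq> 0" "\<epsilon> \<noteq> 0"
  shows "herm3_det a b c \<gamma> \<delta> \<epsilon> = 0 \<and> herm3_minor_sum a b c \<gamma> \<delta> \<epsilon> = 0 \<longleftrightarrow>
    a * \<epsilon> = cnj \<delta> * \<gamma> \<and> b * \<gamma> = \<delta> * \<epsilon> \<and> c * \<delta> = \<gamma> * cnj \<epsilon>"
  using herm3_rank_one_if_det_minor_sum_zero herm3_det_minor_sum_zero_if_rank_one[OF assms] by blast

lemma char_poly_herm3_eq_iff:
  fixes a b c x :: real and \<gamma> \<delta> \<epsilon> :: complex
  assumes "\<gamma> \<noteq> 0" "\<delta> \<noteq> 0" "\<epsilon> \<noteq> 0"
  shows "char_poly (herm3 a b c \<gamma> \<delta> \<epsilon>) = [:- complex_of_real x, 1:] ^ 2 * [:- (complex_of_real (a + b + c) - 2 * complex_of_real x), 1:] \<longleftrightarrow>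
    (a - x) * \<epsilon> = cnj \<delta> * \<gamma> \<and> (b - x) * \<gamma> = \<delta> * \<epsilon> \<and> (c - x) * \<delta> = \<gamma> * cnj \<epsilon>"
proof -
  let ?P = "char_poly (herm3 a b c \<gamma> \<delta> \<epsilon>)"
  obtain c0 c1 where P: "?P = [:c0, c1, - complex_of_real (a + b + c), 1:]"
    using char_poly_herm3 by blast
  have "?P = [:- complex_of_real x, 1:] ^ 2 * [:- (complex_of_real (a + b + c) - 2 * complex_of_real x), 1:] \<longleftrightarrow>
      poly ?P (complex_of_real x) = 0 \<and> poly (pderiv ?P) (complex_of_real x) = 0"
    unfolding P by (rule monic_cubic_eq_square_times_linear_iff) simp
  also have "\<dots> \<longleftrightarrow> herm3_det (a - x) (b - x) (c - x) \<gamma> \<delta> \<epsilon> = 0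
      \<and> herm3_minor_sum (a - x) (b - x) (c - x) \<gamma> \<delta> \<epsilon> = 0"
    unfolding poly_char_poly_herm3 poly_pderiv_char_poly_herm3 by simp
  finally show ?thesis
    unfolding herm3_det_minor_sum_zero_iff[OF assms] by simp
qed

lemma of_real_diff_divide_eq_iff:
  fixes a x :: real and w z :: "'a :: real_field"
  assumes "z \<noteq> 0"
  shows "of_real a - w / z = of_real x \<longleftrightarrow> of_real (a - x) * z = w"
proof -
  have "of_real a - w / z = of_real x \<longleftrightarrow> of_real (a - x) = w / z"
    by (auto simp: algebra_simps)
  also have "\<dots> \<longleftrightarrow> of_real (a - x) * z = w"
    using assms by (simp add: eq_divide_eq)
  finally show ?thesis .
qed

lemma herm3_double_root_iff:
  fixes a b c :: real and \<gamma> \<delta> \<epsilon> l :: complex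
  assumes "\<gamma> \<noteq> 0" "\<delta> \<noteq> 0" "\<epsilon> \<noteq> 0"
  shows "char_poly (herm3 a b c \<gamma> \<delta> \<epsilon>) = [:-l, 1:] ^ 2 * [:- (complex_of_real (a + b + c) - 2 * l), 1:] \<longleftrightarrow>
    a - cnj \<delta> * \<gamma> / \<epsilon> = l \<and> b - \<delta> * \<epsilon> / \<gamma> = l \<and> c - \<gamma> * cnj \<epsilon> / \<delta> = l \<and> l \<in> \<real>"
proof (cases "l \<in> \<real>")
  case True
  then obtain x where l: "l = complex_of_real x"
    by (auto elim: Reals_cases)
  show ?thesis
    unfolding l char_poly_herm3_eq_iff[OF assms] using assms
    by (simp add: of_real_diff_divide_eq_iff)
next
  case False
  then show ?thesis
    using char_poly_herm3_double_root_real by blast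
qed

lemma herm3_double_root_sign:
  fixes a b c :: real and \<gamma> \<delta> \<epsilon> l :: complex
  assumes "\<gamma> \<noteq> 0" "\<delta> \<noteq> 0" "\<epsilon> \<noteq> 0" and "l \<in> \<real>"
    and "a - cnj \<delta> * \<gamma> / \<epsilon> = l" "b - \<delta> * \<epsilon> / \<gamma> = l" "c - \<gamma> * cnj \<epsilon> / \<delta> = l"
  shows "Re l < a + b + c - 2 * Re l \<longleftrightarrow> 0 < Re (\<delta> * \<epsilon> * cnj \<gamma>)"
proof -
  let ?R = "Re (\<delta> * \<epsilon> * cnj \<gamma>)"
  have sign_eq: "0 < s \<longleftrightarrow> 0 < ?R" if "complex_of_real s * cnj z = w" "z \<noteq> 0" "z * w = \<delta> * \<epsilon> * cnj \<gamma>"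
    for s z w
  proof -
    have "complex_of_real (s * (cmod z)^2) = z * (complex_of_real s * cnj z)"
      by (simp add: complex_norm_square[unfolded of_real_power] ac_simps)
    then have "s * (cmod z)^2 = ?R"
      unfolding that(1,3) by (metis Re_complex_of_real)
    moreover have "0 < (cmod z)^2"
      using that(2) by simp
    ultimately show ?thesis
      by (metis mult_pos_pos zero_less_mult_pos2)
  qed
  obtain x where l: "l = complex_of_real x"
    using \<open>l \<in> \<real>\<close> by (auto elim: Reals_cases)
  have a: "(a - x) * \<epsilon> = cnj \<delta> * \<gamma>" and b: "(b - x) * \<gamma> = \<delta> * \<epsilon>" and c: "(c - x) * \<delta> = \<gamma> * cnj \<epsilon>"
    using assms by (simp_all add: l of_real_diff_divide_eq_iff)
  have "0 < a - x \<longleftrightarrow> 0 < ?R"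
    by (rule sign_eq[of _ \<epsilon> "\<delta> * cnj \<gamma>"]) (use assms(3) arg_cong[OF a, of cnj] in \<open>simp_all add: ac_simps\<close>)
  moreover have "0 < b - x \<longleftrightarrow> 0 < ?R"
    by (rule sign_eq[of _ "cnj \<gamma>" "\<delta> * \<epsilon>"]) (use assms(1) b in \<open>simp_all add: ac_simps\<close>)
  moreover have "0 < c - x \<longleftrightarrow> 0 < ?R"
    by (rule sign_eq[of _ \<delta> "cnj \<gamma> * \<epsilon>"]) (use assms(2) arg_cong[OF c, of cnj] in \<open>simp_all add: ac_simps\<close>)
  ultimately show ?thesis
    unfolding l by (cases "0 < ?R") auto
qed

theorem mainTheorem1:
  fixes a b c :: real and \<gamma> \<delta> \<epsilon> :: complex
  assumes "\<gamma> \<noteq> 0" "\<delta> \<noteq> 0" "\<epsilon> \<noteq> 0"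
  defines "A \<equiv> herm3 a b c \<gamma> \<delta> \<epsilon>"
  shows "\<forall>l :: complex.
     ((eigenvalue A l \<and> order l (char_poly A) \<ge> 2) \<longleftrightarrow>
      (complex_of_real a - cnj \<delta> * \<gamma> / \<epsilon> = l \<and>
       complex_of_real b - \<delta> * \<epsilon> / \<gamma> = l \<and>
       complex_of_real c - \<gamma> * cnj \<epsilon> / \<delta> = l \<and> l \<in> \<real>))
   \<and> (\<forall>l :: complex.
       (complex_of_real a - cnj \<delta> * \<gamma> / \<epsilon> = l \<and>
        complex_of_real b - \<delta> * \<epsilon> / \<gamma> = l \<and>
        complex_of_real c - \<gamma> * cnj \<epsilon> / \<delta> = l \<and> l \<in> \<real>) \<longrightarrow>
       (let l' = mat_trace A - 2 * l in
          char_poly A = [:- l, 1:] ^ 2 * [:- l', 1:] \<and>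
          l' \<in> \<real> \<and>
          (Re l' > Re l \<longleftrightarrow> Re (\<delta> * \<epsilon> * cnj \<gamma>) > 0)))"
proof -
  have trace: "mat_trace A = complex_of_real (a + b + c)"
    unfolding A_def by (rule mat_trace_herm3)
  have factor_iff: "char_poly A = [:-l, 1:] ^ 2 * [:- (mat_trace A - 2 * l), 1:] \<longleftrightarrow>
      complex_of_real a - cnj \<delta> * \<gamma> / \<epsilon> = l \<and> complex_of_real b - \<delta> * \<epsilon> / \<gamma> = l \<and>
      complex_of_real c - \<gamma> * cnj \<epsilon> / \<delta> = l \<and> l \<in> \<real>" for l
    unfolding trace unfolding A_def by (rule herm3_double_root_iff[OF assms(1-3)])
  have double_root_iff: "eigenvalue A l \<and> 2 \<le> order l (char_poly A) \<longleftrightarrow>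
      char_poly A = [:-l, 1:] ^ 2 * [:- (mat_trace A - 2 * l), 1:]" for l
    unfolding multiple_eigenvalue_iff_square_dvd_char_poly[OF herm3_carrier[of a b c \<gamma> \<delta> \<epsilon>, folded A_def]]
      trace unfolding A_def char_poly_herm3 by (rule square_dvd_monic_cubic_iff) simp
  show ?thesis
  proof (intro conjI allI impI)
    fix l
    assume eqs: "complex_of_real a - cnj \<delta> * \<gamma> / \<epsilon> = l \<and> complex_of_real b - \<delta> * \<epsilon> / \<gamma> = l \<and>
      complex_of_real c - \<gamma> * cnj \<epsilon> / \<delta> = l \<and> l \<in> \<real>"
    then show "let l' = mat_trace A - 2 * l in
      char_poly A = [:- l, 1:] ^ 2 * [:- l', 1:] \<and> l' \<in> \<real> \<and> (Re l' > Re l \<longleftrightarrow> Re (\<delta> * \<epsilon> * cnj \<gamma>) > 0)"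
      using factor_iff herm3_double_root_sign[OF assms(1-3)] unfolding Let_def trace by auto
  qed (simp only: double_root_iff factor_iff)
qed

end
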